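(* Let $\ell$ be a positive integer. Construct $\mathcal C^*\subseteq\mathcal C$ and the sets $\mathcal U_v$ ($v\in\mathcal C^*$) as described in the context. Then: (C1) for all distinct $v,v'\in\mathcal C^*$, $d(v,v')>2\ell\max\{d_{av}(v),d_{av}(v')\}$; (C2) for every $j\in\mathcal C$ there is $v\in\mathcal C^*$ with $d_{av}(v)\le d_{av}(j)$ and $d(v,j)\le2\ell d_{av}(j)$; (C3) $\sum_{i\in\mathcal U_v}y_i\ge1-1/\ell$ for every $v\in\mathcal C^*$; (C4) for every $v\in\mathcal C^*$, $i\in\mathcal U_v$ and $j\in\mathcal C$, $d(i,v)\le d(i,j)+2\ell d_{av}(j)$.
   Context: Setting: finite sets $\mathcal F$ (facility locations) and $\mathcal C$ (clients), a metric $d$ on $\mathcal F\cup\mathcal C$, positive integers $k,u$, and real numbers $x_{i,j}\ge0$, $y_i\ge0$ ($i\in\mathcal F$, $j\in\mathcal C$) with $\sum_{i\in\mathcal F}x_{i,j}=1$ for all $j$, $\sum_i y_i\le k$, $x_{i,j}\le y_i$ for all $i,j$, and $\sum_{j}x_{i,j}\le u y_i$ for all $i$. Let $d_{av}(j)=\sum_{i\in\mathcal F}x_{i,j}d(i,j)$. Construction of $\mathcal C^*$: start with $\mathcal C^*=\emptyset$ and $R=\mathcal C$; while $R\neq\emptyset$, choose $v\in R$ with smallest $d_{av}(v)$, add $v$ to $\mathcal C^*$, and remove from $R$ all $j\in R$ with $d(j,v)\le2\ell d_{av}(j)$ (this includes $v$). Then each location $i\in\mathcal F$ is put into $\mathcal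 U_v$ for one $v\in\mathcal C^*$ closest to $i$ (ties broken arbitrarily), so $\{\mathcal U_v\}_{v\in\mathcal C^*}$ partitions $\mathcal F$. *)

theory Defs
  imports Complex_Main
begin

definition d_av :: "('a \<Rightarrow> 'a \<Rightarrow> real) \<Rightarrow> 'a set \<Rightarrow> ('a \<Rightarrow> 'a \<Rightarrow> real) \<Rightarrow> 'a \<Rightarrow> real" where
  "d_av d F x j = (\<Sum>i\<in>F. x i j * d i j)"

text \<open>One step of the greedy construction of C*: state (S, R) = (current C*, remaining clients).
  Pick v in R of smallest dav, add it to S and remove from R every j with d j v \<le> 2 l dav j.\<close>
inductive greedy_step :: "('a \<Rightarrow> 'a \<Rightarrow> real) \<Rightarrow> ('a \<Rightarrow> real) \<Rightarrow> real \<Rightarrow>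
    ('a set \<times> 'a set) \<Rightarrow> ('a set \<times> 'a set) \<Rightarrow> bool"
  for d :: "'a \<Rightarrow> 'a \<Rightarrow> real" and dav :: "'a \<Rightarrow> real" and l :: real where
  "v \<in> R \<Longrightarrow> (\<forall>w\<in>R. dav v \<le> dav w) \<Longrightarrow>
   greedy_step d dav l (S, R) (insert v S, R - {j \<in> R. d j v \<le> 2 * l * dav j})"

definition greedy_result :: "('a \<Rightarrow> 'a \<Rightarrow> real) \<Rightarrow> ('a \<Rightarrow> real) \<Rightarrow> real \<Rightarrow> 'a set \<Rightarrow> 'a set \<Rightarrow> bool" where
  "greedy_result d dav l C Cs \<longleftrightarrow> (greedy_step d dav l)\<^sup>*\<^sup>* ({}, C) (Cs, {})"

end

theory Submission
  imports Defs
begin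

text \<open>Throughout the greedy loop, every chosen centre is no more expensive than, and more than
  2l d_av(j) away from, every client j still remaining; this yields (C1), and together with the
  removal rule (C2). For (C3), by (C1) and the triangle inequality every facility within
  l d_av(v) of v is assigned to v, and by Markov's inequality these facilities carry x-mass at
  least 1 - 1/l towards v, hence y-mass at least as much. (C4) is the triangle inequality
  through a centre covering j.\<close>

definition separated :: "('a \<Rightarrow> 'a \<Rightarrow> real) \<Rightarrow> ('a \<Rightarrow> real) \<Rightarrow> real \<Rightarrow> 'a set \<Rightarrow> bool" where
  "separated d dav l S \<longleftrightarrow>
     (\<forall>v\<in>S. \<forall>w\<in>S. v \<noteq> w \<longrightarrow> d v w > 2 * l * max (dav v) (dav w))"

lemma separated_far:
  assumes "separated d dav l S" "0 \<le> l" "v \<in> S" "w \<in> S" "w \<noteq> v"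
  shows "2 * (l * dav v) < d v w"
proof -
  have "l * dav v \<le> l * max (dav v) (dav w)" using \<open>0 \<le> l\<close> by (intro mult_left_mono) auto
  moreover have "2 * l * max (dav v) (dav w) < d v w"
    using assms unfolding separated_def by (metis (no_types))
  ultimately show ?thesis by linarith
qed

lemma separated_insert:
  assumes "separated d dav l S"
    and "\<forall>w\<in>S. dav w \<le> dav v \<and> 2 * l * dav v < d v w"
    and "\<forall>w\<in>S. d w v = d v w"
  shows "separated d dav l (insert v S)"
  using assms unfolding separated_def by (auto simp: max_def)

definition greedy_invariant ::
    "('a \<Rightarrow> 'a \<Rightarrow> real) \<Rightarrow> ('a \<Rightarrow> real) \<Rightarrow> real \<Rightarrow> 'a set \<Rightarrow> 'a set \<times> 'a set \<Rightarrow> bool" where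
  "greedy_invariant d dav l C SR \<longleftrightarrow> (case SR of (S, R) \<Rightarrow>
     S \<subseteq> C \<and> R \<subseteq> C \<and> separated d dav l S \<and>
     (\<forall>j\<in>C - R. \<exists>v\<in>S. dav v \<le> dav j \<and> d j v \<le> 2 * l * dav j) \<and>
     (\<forall>v\<in>S. \<forall>j\<in>R. dav v \<le> dav j \<and> 2 * l * dav j < d j v))"

lemma greedy_step_invariant:
  assumes step: "greedy_step d dav l SR SR'"
    and inv: "greedy_invariant d dav l C SR"
    and d_sym: "\<forall>p\<in>C. \<forall>q\<in>C. d p q = d q p"
  shows "greedy_invariant d dav l C SR'"
  using step
proof cases
  case (1 v R S)
  have "S \<subseteq> C" "R \<subseteq> C" "separated d dav l S"
    and covered: "\<forall>j\<in>C - R. \<exists>w\<in>S. dav w \<le> dav j \<and> d j w \<le> 2 * l * dav j"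
    and far: "\<forall>w\<in>S. \<forall>j\<in>R. dav w \<le> dav j \<and> 2 * l * dav j < d j w"
    using inv 1 unfolding greedy_invariant_def by auto
  have "v \<in> C" using 1 \<open>R \<subseteq> C\<close> by auto
  have "separated d dav l (insert v S)"
    using far 1 \<open>S \<subseteq> C\<close> \<open>v \<in> C\<close> d_sym
    by (intro separated_insert \<open>separated d dav l S\<close>) auto
  moreover have "\<exists>w\<in>insert v S. dav w \<le> dav j \<and> d j w \<le> 2 * l * dav j"
    if "j \<in> C - (R - {j \<in> R. d j v \<le> 2 * l * dav j})" for j
    using that covered 1 by (cases "j \<in> R") auto
  ultimately show ?thesis
    using 1 far \<open>S \<subseteq> C\<close> \<open>R \<subseteq> C\<close> \<open>v \<in> C\<close> unfolding greedy_invariant_def by auto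
qed

lemma greedy_result_separating_cover:
  assumes "greedy_result d dav l C Cs"
    and d_sym: "\<forall>p\<in>C. \<forall>q\<in>C. d p q = d q p"
  shows "Cs \<subseteq> C" "separated d dav l Cs"
    and "\<forall>j\<in>C. \<exists>v\<in>Cs. dav v \<le> dav j \<and> d j v \<le> 2 * l * dav j"
proof -
  have "greedy_invariant d dav l C (Cs, {})"
    using assms(1) unfolding greedy_result_def
  proof (induction rule: rtranclp_induct)
    case base
    show ?case by (simp add: greedy_invariant_def separated_def)
  next
    case (step SR SR')
    then show ?case using greedy_step_invariant d_sym by blast
  qed
  then show "Cs \<subseteq> C" "separated d dav l Cs"
    and "\<forall>j\<in>C. \<exists>v\<in>Cs. dav v \<le> dav j \<and> d j v \<le> 2 * l * dav j"
    unfolding greedy_invariant_def by auto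
qed

lemma weight_above_scaled_mean_le:
  fixes w c :: "'a \<Rightarrow> real"
  assumes "finite A" and w_nonneg: "\<forall>i\<in>A. 0 \<le> w i" and c_nonneg: "\<forall>i\<in>A. 0 \<le> c i"
    and "0 < l"
  shows "l * (\<Sum>i\<in>{i\<in>A. l * (\<Sum>j\<in>A. w j * c j) < c i}. w i) \<le> 1"
proof -
  define m where "m = (\<Sum>j\<in>A. w j * c j)"
  define H where "H = {i\<in>A. l * m < c i}"
  have "l * m * (\<Sum>i\<in>H. w i) = (\<Sum>i\<in>H. w i * (l * m))"
    by (simp add: sum_distrib_left mult.commute)
  also have "\<dots> \<le> (\<Sum>i\<in>H. w i * c i)"
    using w_nonneg unfolding H_def by (intro sum_mono) (auto intro: mult_left_mono)
  also have "\<dots> \<le> m"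
    unfolding m_def H_def using \<open>finite A\<close> w_nonneg c_nonneg by (intro sum_mono2) auto
  finally have markov: "l * m * (\<Sum>i\<in>H. w i) \<le> m" .
  show ?thesis
  proof (cases "m = 0")
    case True
    then have "\<forall>i\<in>A. w i * c i = 0"
      using \<open>finite A\<close> w_nonneg c_nonneg unfolding m_def by (subst (asm) sum_nonneg_eq_0_iff) auto
    then have "\<forall>i\<in>H. w i = 0" using True unfolding H_def by auto
    then show ?thesis by (simp add: H_def m_def)
  next
    case False
    have "0 \<le> m" unfolding m_def using w_nonneg c_nonneg by (auto intro: sum_nonneg)
    with False have "0 < m" by simp
    then show ?thesis using markov by (simp add: H_def m_def mult.assoc mult.commute)
  qed
qed

lemma cluster_mass_ge:
  fixes l :: real
  assumes "finite F" and "0 < l"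
    and x_nonneg: "\<forall>i\<in>F. 0 \<le> x i j" and x_sum: "(\<Sum>i\<in>F. x i j) = 1"
    and x_le_y: "\<forall>i\<in>F. x i j \<le> y i" and y_nonneg: "\<forall>i\<in>F. 0 \<le> y i"
    and d_nonneg: "\<forall>i\<in>F. 0 \<le> d i j"
    and near: "{i\<in>F. d i j \<le> l * d_av d F x j} \<subseteq> U" and "U \<subseteq> F"
  shows "1 - 1 / l \<le> (\<Sum>i\<in>U. y i)"
proof -
  define B where "B = {i\<in>F. d i j \<le> l * d_av d F x j}"
  have "F - B = {i\<in>F. l * (\<Sum>i\<in>F. x i j * d i j) < d i j}"
    unfolding B_def d_av_def by auto
  then have "l * (\<Sum>i\<in>F - B. x i j) \<le> 1"
    using weight_above_scaled_mean_le[of F "\<lambda>i. x i j" "\<lambda>i. d i j" l] assms by simp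
  then have far: "(\<Sum>i\<in>F - B. x i j) \<le> 1 / l"
    using \<open>0 < l\<close> by (simp add: field_simps)
  have "B \<subseteq> F" by (auto simp: B_def)
  then have "(\<Sum>i\<in>F. x i j) = (\<Sum>i\<in>F - B. x i j) + (\<Sum>i\<in>B. x i j)"
    using \<open>finite F\<close> by (rule sum.subset_diff)
  then have "1 - 1 / l \<le> (\<Sum>i\<in>B. x i j)" using far x_sum by linarith
  also have "\<dots> \<le> (\<Sum>i\<in>B. y i)" using x_le_y by (auto simp: B_def intro: sum_mono)
  also have "\<dots> \<le> (\<Sum>i\<in>U. y i)"
    using \<open>finite F\<close> \<open>U \<subseteq> F\<close> near y_nonneg
    by (intro sum_mono2) (auto simp: B_def intro: finite_subset)
  finally show ?thesis .
qed

lemma closest_center_eq_if_near: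
  fixes d :: "'a \<Rightarrow> 'a \<Rightarrow> real"
  assumes d_sym: "\<forall>p\<in>M. \<forall>q\<in>M. d p q = d q p"
    and d_tri: "\<forall>p\<in>M. \<forall>q\<in>M. \<forall>r\<in>M. d p r \<le> d p q + d q r"
    and "i \<in> M" "Cs \<subseteq> M" "v \<in> Cs"
    and closest: "\<sigma> i \<in> Cs" "\<forall>w\<in>Cs. d i (\<sigma> i) \<le> d i w"
    and near: "d i v \<le> r" and far: "\<forall>w\<in>Cs. w \<noteq> v \<longrightarrow> 2 * r < d v w"
  shows "\<sigma> i = v"
proof (rule ccontr)
  assume "\<sigma> i \<noteq> v"
  have "v \<in> M" using \<open>v \<in> Cs\<close> \<open>Cs \<subseteq> M\<close> by blast
  have "d v (\<sigma> i) \<le> d v i + d i (\<sigma> i)"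
    using d_tri \<open>i \<in> M\<close> \<open>v \<in> M\<close> closest(1) \<open>Cs \<subseteq> M\<close> by blast
  moreover have "d v i = d i v" using d_sym \<open>i \<in> M\<close> \<open>v \<in> M\<close> by blast
  moreover have "d i (\<sigma> i) \<le> d i v" using closest(2) \<open>v \<in> Cs\<close> by blast
  moreover have "2 * r < d v (\<sigma> i)" using far closest(1) \<open>\<sigma> i \<noteq> v\<close> by blast
  ultimately show False using near by linarith
qed

theorem claim2:
  fixes F C :: "'a set" and d :: "'a \<Rightarrow> 'a \<Rightarrow> real"
    and k u l :: nat and x :: "'a \<Rightarrow> 'a \<Rightarrow> real" and y :: "'a \<Rightarrow> real"
    and Cs :: "'a set" and \<sigma> :: "'a \<Rightarrow> 'a"
  assumes finF: "finite F" and finC: "finite C"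
    and d_zero: "\<forall>p\<in>F \<union> C. d p p = 0"
    and d_pos: "\<forall>p\<in>F \<union> C. \<forall>q\<in>F \<union> C. p \<noteq> q \<longrightarrow> d p q > 0"
    and d_sym: "\<forall>p\<in>F \<union> C. \<forall>q\<in>F \<union> C. d p q = d q p"
    and d_tri: "\<forall>p\<in>F \<union> C. \<forall>q\<in>F \<union> C. \<forall>r\<in>F \<union> C. d p r \<le> d p q + d q r"
    and k_pos: "k > 0" and u_pos: "u > 0"
    and x_nonneg: "\<forall>i\<in>F. \<forall>j\<in>C. x i j \<ge> 0"
    and y_nonneg: "\<forall>i\<in>F. y i \<ge> 0"
    and x_sum: "\<forall>j\<in>C. (\<Sum>i\<in>F. x i j) = 1"
    and y_sum: "(\<Sum>i\<in>F. y i) \<le> real k"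
    and x_le_y: "\<forall>i\<in>F. \<forall>j\<in>C. x i j \<le> y i"
    and cap: "\<forall>i\<in>F. (\<Sum>j\<in>C. x i j) \<le> real u * y i"
    and l_pos: "l > 0"
    and greedy: "greedy_result d (d_av d F x) (real l) C Cs"
    and assign: "\<forall>i\<in>F. \<sigma> i \<in> Cs \<and> (\<forall>w\<in>Cs. d i (\<sigma> i) \<le> d i w)"
  shows "(\<forall>v\<in>Cs. \<forall>v'\<in>Cs. v \<noteq> v' \<longrightarrow>
            d v v' > 2 * real l * max (d_av d F x v) (d_av d F x v'))
       \<and> (\<forall>j\<in>C. \<exists>v\<in>Cs. d_av d F x v \<le> d_av d F x j \<and> d v j \<le> 2 * real l * d_av d F x j)
       \<and> (\<forall>v\<in>Cs. (\<Sum>i\<in>{i\<in>F. \<sigma> i = v}. y i) \<ge> 1 - 1 / real l)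
       \<and> (\<forall>v\<in>Cs. \<forall>i\<in>{i\<in>F. \<sigma> i = v}. \<forall>j\<in>C.
            d i v \<le> d i j + 2 * real l * d_av d F x j)"
proof -
  let ?dav = "d_av d F x"
  have d_nonneg: "0 \<le> d p q" if "p \<in> F \<union> C" "q \<in> F \<union> C" for p q
    using d_zero d_pos that by (cases "p = q") (auto intro: less_imp_le)
  have "\<forall>p\<in>C. \<forall>q\<in>C. d p q = d q p" using d_sym by blast
  then have "Cs \<subseteq> C" and sep: "separated d ?dav (real l) Cs"
    and cover: "\<forall>j\<in>C. \<exists>w\<in>Cs. ?dav w \<le> ?dav j \<and> d j w \<le> 2 * real l * ?dav j"
    using greedy_result_separating_cover[OF greedy] by blast+
  have C2: "\<exists>w\<in>Cs. ?dav w \<le> ?dav j \<and> d w j \<le> 2 * real l * ?dav j" if "j \<in> C" for j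
    using cover d_sym that \<open>Cs \<subseteq> C\<close> by fastforce
  have C3: "1 - 1 / real l \<le> (\<Sum>i\<in>{i\<in>F. \<sigma> i = v}. y i)" if "v \<in> Cs" for v
  proof -
    have "{i\<in>F. d i v \<le> real l * ?dav v} \<subseteq> {i\<in>F. \<sigma> i = v}"
      using closest_center_eq_if_near[OF d_sym d_tri _ _ \<open>v \<in> Cs\<close>, where \<sigma> = \<sigma>]
        separated_far[OF sep of_nat_0_le_iff \<open>v \<in> Cs\<close>] assign \<open>Cs \<subseteq> C\<close> by blast
    moreover have "v \<in> C" using that \<open>Cs \<subseteq> C\<close> by blast
    ultimately show ?thesis
      by (intro cluster_mass_ge[OF finF _ _ _ _ y_nonneg])
        (use l_pos x_nonneg x_sum x_le_y d_nonneg in auto)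
  qed
  have C4: "d i v \<le> d i j + 2 * real l * ?dav j" if "v \<in> Cs" "i \<in> F" "\<sigma> i = v" "j \<in> C" for v i j
  proof -
    obtain w where "w \<in> Cs" "d j w \<le> 2 * real l * ?dav j" using cover \<open>j \<in> C\<close> by blast
    moreover have "d i v \<le> d i w" using assign that \<open>w \<in> Cs\<close> by blast
    moreover have "d i w \<le> d i j + d j w" using d_tri that \<open>w \<in> Cs\<close> \<open>Cs \<subseteq> C\<close> by blast
    ultimately show ?thesis by linarith
  qed
  have C1: "\<forall>v\<in>Cs. \<forall>v'\<in>Cs. v \<noteq> v' \<longrightarrow> d v v' > 2 * real l * max (?dav v) (?dav v')"
    using sep unfolding separated_def .
  show ?thesis using C1 by (auto intro: C2 C3 C4)
qed

end
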